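(* Let $n\ge2$ be an integer and let $w>0$ be fixed. For $\alpha>0$ let $\overline{G}_\alpha(x)=\int_x^\infty\frac{1}{\Gamma(\alpha)}e^{-t}t^{\alpha-1}\,dt$, $x\ge0$. For $\mu\ge0$ define $$I_1(\mu)=\int_0^{\mu/n}ue^{2nu}\overline{G}_{2n}\!\left(\frac{u(1+nw)}{w}\right)du,\qquad I_2(\mu)=\int_0^{\mu/n}e^{2nu}\overline{G}_{2n+1}\!\left(\frac{u(1+nw)}{w}\right)du,$$ $$I_3(\mu)=\frac{\mu}{1+nI_2(\mu)},\qquad I_4(\mu)=\frac{I_1(\mu)}{1+nI_2(\mu)},\qquad k(\mu)=\frac{1+\mu-2n^2I_1(\mu)}{1+nI_2(\mu)}.$$ Then: (i) $\lim_{\mu\to\infty}I_1(\mu)=\left(\frac{1+nw}{1-nw}\right)^{2n}\left[\frac{w}{1-nw}-\frac{1}{4n^2}\right]+\frac{1}{4n^2}$ if $0<w<\frac1n$, and $=\infty$ if $w\ge\frac1n$; (ii) $\lim_{\mu\to\infty}I_2(\mu)=\frac{1}{2n}\left[\left(\frac{1+nw}{1-nw}\right)^{2n+1}-1\right]$ if $0<w<\frac1n$, and $=\infty$ if $w\ge\frac1n$; (iii) $\lim_{\mu\to\infty}I_3(\mu)=\infty$ if $0<w<\frac1n$, and $=0$ if $w\ge\frac1n$; (iv) $\lim_{\mu\to\infty}I_4(\mu)=\dfrac{\lim_{\mu\to\infty}I_1(\mu)}{1+n\lim_{\mu\to\infty}I_2(\mu)}$ if $0<w<\frac1n$, and $=\frac{2w}{1+nw}$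 if $w\ge\frac1n$; (v) $\lim_{\mu\to\infty}k(\mu)=\infty$ if $0<w<\frac1n$, and $=-\frac{4n^2w}{1+nw}$ if $w\ge\frac1n$; (vi) $\sup_{\mu\ge0}k(\mu)=\infty$ if $0<w<\frac1n$, and $=1$ if $w\ge\frac1n$; (vii) if $w\ge\frac1n$ then $\inf_{\mu\ge0}k(\mu)=-\frac{4n^2w}{1+nw}$; and for every $w>0$, $\inf_{\mu\ge0}k(\mu)\ge-\frac{4n^2w}{1+nw}$.
   Context: $\Gamma$ denotes the gamma function, so $\overline{G}_\alpha$ is the survival function of the Gamma$(\alpha,1)$ distribution. *)

theory Defs
  imports "HOL-Analysis.Analysis"
begin

definition Gbar :: "real \<Rightarrow> real \<Rightarrow> real" where
  "Gbar \<alpha> x = (LBINT t:{x..}. exp (- t) * t powr (\<alpha> - 1) / Gamma \<alpha>)"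

definition I1 :: "nat \<Rightarrow> real \<Rightarrow> real \<Rightarrow> real" where
  "I1 n w \<mu> = (LBINT u:{0..\<mu> / real n}.
      u * exp (2 * real n * u) * Gbar (2 * real n) (u * (1 + real n * w) / w))"

definition I2 :: "nat \<Rightarrow> real \<Rightarrow> real \<Rightarrow> real" where
  "I2 n w \<mu> = (LBINT u:{0..\<mu> / real n}.
      exp (2 * real n * u) * Gbar (2 * real n + 1) (u * (1 + real n * w) / w))"

definition I3 :: "nat \<Rightarrow> real \<Rightarrow> real \<Rightarrow> real" where
  "I3 n w \<mu> = \<mu> / (1 + real n * I2 n w \<mu>)"

definition I4 :: "nat \<Rightarrow> real \<Rightarrow> real \<Rightarrow> real" where
  "I4 n w \<mu> = I1 n w \<mu> / (1 + real n * I2 n w \<mu>)"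

definition kfun :: "nat \<Rightarrow> real \<Rightarrow> real \<Rightarrow> real" where
  "kfun n w \<mu> = (1 + \<mu> - 2 * (real n)^2 * I1 n w \<mu>) / (1 + real n * I2 n w \<mu>)"

end

(*
  For integer shape m the Gamma survival function is elementary:
  Gbar m x = exp (-x) E_m(x), where E_m(x) is the sum of x^j / j! over j < m.
  With a = (1 + n w) / w and b = a - 2 n = (1 - n w) / w, both integrands are
  exp (-b u) times polynomials in u.  If w < 1/n then b > 0, the integrals over
  [0, oo) converge and are sums of Gamma integrals, which evaluate to the stated
  limits; as I2 stays bounded, I3 and k grow like mu.  If w >= 1/n the integrand
  of I2 is at least 1 + a u, so I2 grows superlinearly, and l'Hopital's rule
  together with x E_2n(x) / E_(2n+1)(x) -> 2n gives the limits of I3, I4 and k.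
  The bounds on k follow from the pointwise inequality x E_2n(x) <= 2n E_(2n+1)(x),
  i.e. I1 <= (2n/a) I2, and, for w >= 1/n, from n I2(mu) >= mu.
*)
theory Submission
  imports Defs
begin

section \<open>Truncated exponential series\<close>

definition exp_trunc :: "nat \<Rightarrow> real \<Rightarrow> real" where
  "exp_trunc m x = (\<Sum>j<m. x ^ j / fact j)"

lemma exp_trunc_Suc: "exp_trunc (Suc m) x = exp_trunc m x + x ^ m / fact m"
  unfolding exp_trunc_def by simp

lemma exp_trunc_0_right: "0 < m \<Longrightarrow> exp_trunc m 0 = 1"
  unfolding exp_trunc_def by (cases m) (simp_all del: sum.lessThan_Suc add: sum.lessThan_Suc_shift)

lemma exp_trunc_nonneg: "0 \<le> x \<Longrightarrow> 0 \<le> exp_trunc m x"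
  unfolding exp_trunc_def by (intro sum_nonneg) auto

lemma one_plus_le_exp_trunc:
  assumes x: "0 \<le> x" and m: "2 \<le> m"
  shows "1 + x \<le> exp_trunc m x"
  using m
proof (induction m rule: dec_induct)
  case base
  show ?case by (simp add: exp_trunc_def numeral_2_eq_2)
next
  case (step m)
  then show ?case using x by (simp add: exp_trunc_Suc add_increasing2)
qed

lemma has_real_derivative_exp_trunc:
  "(exp_trunc (Suc m) has_real_derivative exp_trunc m x) (at x)"
proof (induction m)
  case 0
  show ?case by (simp add: exp_trunc_def)
next
  case (Suc m)
  have "((\<lambda>x. x ^ Suc m / fact (Suc m)) has_real_derivative x ^ m / fact m) (at x)"
    using DERIV_cdivide[OF DERIV_pow[of "Suc m" x], of "fact (Suc m)"]
    by (simp add: field_simps del: of_nat_Suc)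
  from DERIV_add[OF Suc this] show ?case
    by (simp add: exp_trunc_Suc[abs_def] exp_trunc_Suc)
qed

lemma mult_exp_trunc_le:
  assumes x: "0 \<le> x"
  shows "x * exp_trunc m x \<le> real m * exp_trunc (Suc m) x"
proof -
  have "x * exp_trunc m x = (\<Sum>j<m. real (Suc j) * (x ^ Suc j / fact (Suc j)))"
    unfolding exp_trunc_def sum_distrib_left
    by (intro sum.cong refl) (simp add: field_simps del: of_nat_Suc)
  also have "\<dots> \<le> (\<Sum>j<m. real m * (x ^ Suc j / fact (Suc j)))"
    using x by (intro sum_mono mult_right_mono) auto
  also have "\<dots> \<le> real m * exp_trunc (Suc m) x"
    unfolding exp_trunc_def sum_distrib_left[symmetric]
    by (intro mult_left_mono) (simp_all add: sum.lessThan_Suc_shift del: sum.lessThan_Suc)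
  finally show ?thesis .
qed

lemma exp_trunc_Suc_minus_mult_le:
  assumes x: "0 \<le> x" and m: "0 < m"
  shows "real m * exp_trunc (Suc m) x - x * exp_trunc m x \<le> real m * exp_trunc m x"
proof -
  obtain k where k: "m = Suc k"
    using m gr0_conv_Suc by blast
  have "real m * (x ^ m / fact m) = x * (x ^ k / fact k)"
    by (simp add: k field_simps del: of_nat_Suc)
  also have "\<dots> \<le> x * exp_trunc m x"
    using x by (intro mult_left_mono) (auto simp: k exp_trunc_Suc exp_trunc_nonneg)
  finally show ?thesis
    by (simp add: exp_trunc_Suc algebra_simps)
qed

lemma exp_trunc_le_power:
  assumes "1 \<le> x"
  shows "exp_trunc m x \<le> real m * x ^ (m - 1)"
proof -
  have "x ^ j / fact j \<le> x ^ (m - 1)" if "j < m" for j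
  proof -
    have "x ^ j / fact j \<le> x ^ j / 1"
      using assms by (intro divide_left_mono) auto
    also have "\<dots> \<le> x ^ (m - 1)"
      using assms that by (simp, intro power_increasing) auto
    finally show ?thesis .
  qed
  then have "exp_trunc m x \<le> (\<Sum>j<m. x ^ (m - 1))"
    unfolding exp_trunc_def by (intro sum_mono) auto
  then show ?thesis
    by simp
qed

lemma tendsto_mult_exp_trunc_divide_exp_trunc_Suc:
  assumes m: "0 < m"
  shows "((\<lambda>x. x * exp_trunc m x / exp_trunc (Suc m) x) \<longlongrightarrow> real m) at_top"
proof (rule tendsto_sandwich)
  \<comment> \<open>m E_(m+1) x - x E_m x <= m E_m x <= m^2 x^(m-1), while E_(m+1) x >= x^m / m!\<close>
  define c where "c = real m * (real m * fact m)"
  have pos: "0 < exp_trunc (Suc m) x" if "0 \<le> x" for x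
    using one_plus_le_exp_trunc[OF that, of "Suc m"] that m by simp
  show "\<forall>\<^sub>F x in at_top. x * exp_trunc m x / exp_trunc (Suc m) x \<le> real m"
    using eventually_ge_at_top[of "0::real"]
    by eventually_elim (use mult_exp_trunc_le pos in \<open>simp add: divide_le_eq\<close>)
  show "\<forall>\<^sub>F x in at_top. real m - c / x \<le> x * exp_trunc m x / exp_trunc (Suc m) x"
    using eventually_ge_at_top[of "1::real"]
  proof eventually_elim
    case (elim x)
    have "real m * exp_trunc m x \<le> real m * (real m * x ^ (m - 1))"
      using exp_trunc_le_power[OF elim] by (intro mult_left_mono) auto
    also have "\<dots> = c / x * (x ^ m / fact m)"
    proof -
      have "x ^ m = x * x ^ (m - 1)"
        using m by (cases m) auto
      then show ?thesis
        using elim by (simp add: c_def field_simps)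
    qed
    also have "\<dots> \<le> c / x * exp_trunc (Suc m) x"
      using elim by (intro mult_left_mono) (auto simp: c_def exp_trunc_Suc exp_trunc_nonneg)
    finally have "real m * exp_trunc (Suc m) x - x * exp_trunc m x \<le> c / x * exp_trunc (Suc m) x"
      using exp_trunc_Suc_minus_mult_le[of x m] elim m by linarith
    then show ?case
      using pos[of x] elim by (simp add: field_simps)
  qed
  show "((\<lambda>x. real m - c / x) \<longlongrightarrow> real m) at_top"
    using tendsto_diff[OF tendsto_const[of "real m"]
        tendsto_divide_0[OF tendsto_const[of c] filterlim_at_top_imp_at_infinity[OF filterlim_ident]]]
    by simp
qed (rule tendsto_const)

section \<open>Gamma integrals with integer shape\<close>

lemma has_real_derivative_exp_neg_mult_exp_trunc:
  "((\<lambda>y. exp (- y) * exp_trunc (Suc m) y) has_real_derivative - (exp (- y) * y ^ m / fact m)) (at y)"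
proof -
  have "((\<lambda>y. exp (- y)) has_real_derivative - exp (- y)) (at y)"
    by (auto intro!: derivative_eq_intros)
  from DERIV_mult[OF this has_real_derivative_exp_trunc] show ?thesis
    by (simp add: exp_trunc_Suc algebra_simps)
qed

lemma tendsto_exp_neg_mult_exp_trunc: "((\<lambda>y. exp (- y) * exp_trunc m y) \<longlongrightarrow> 0) at_top"
proof -
  have "((\<lambda>y::real. \<Sum>j<m. y ^ j / exp y / fact j) \<longlongrightarrow> 0) at_top"
    by (intro tendsto_null_sum[where f="\<lambda>y j. y ^ j / exp y / fact j"]
          tendsto_divide_zero tendsto_power_div_exp_0)
  then show ?thesis
    by (simp add: exp_trunc_def sum_distrib_left exp_minus field_simps)
qed

lemma has_bochner_integral_power_exp_tail:
  fixes b x :: real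
  assumes b: "0 < b" and x: "0 \<le> x"
  shows "has_bochner_integral lborel (\<lambda>t. indicator {x..} t * (t ^ k * exp (- (b * t))))
           (fact k / b ^ Suc k * (exp (- (b * x)) * exp_trunc (Suc k) (b * x)))"
proof -
  define F where "F t = - (fact k / b ^ Suc k) * (exp (- (b * t)) * exp_trunc (Suc k) (b * t))" for t
  have F': "(F has_real_derivative t ^ k * exp (- (b * t))) (at t)" for t
  proof -
    have "((\<lambda>t. exp (- (b * t)) * exp_trunc (Suc k) (b * t)) has_real_derivative
            - (exp (- (b * t)) * (b * t) ^ k / fact k) * b) (at t)"
      by (rule DERIV_chain2[OF has_real_derivative_exp_neg_mult_exp_trunc])
         (auto intro!: derivative_eq_intros)
    from DERIV_cmult[OF this, of "- (fact k / b ^ Suc k)"] show ?thesis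
      unfolding F_def[abs_def] using b by (simp add: power_mult_distrib field_simps)
  qed
  have "filterlim (\<lambda>t. b * t) at_top at_top"
    using b by (intro filterlim_tendsto_pos_mult_at_top[OF tendsto_const] filterlim_ident)
  from filterlim_compose[OF tendsto_exp_neg_mult_exp_trunc this]
  have F_lim: "(F \<longlongrightarrow> 0) at_top"
    unfolding F_def[abs_def] by (intro tendsto_mult_right_zero)
  have "(\<integral>\<^sup>+t. ennreal (t ^ k * exp (- (b * t))) * indicator {x..} t \<partial>lborel) = 0 - F x"
    by (rule nn_integral_FTC_atLeast[OF _ F' _ F_lim]) (use x in auto)
  then show ?thesis
    using b x
    by (intro has_bochner_integral_nn_integral)
       (auto simp: F_def ennreal_mult' indicator_mult_ennreal mult.commute exp_trunc_nonneg
             split: split_indicator intro!: nn_integral_cong)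
qed

lemma Gbar_of_nat:
  assumes m: "0 < m" and x: "0 \<le> x"
  shows "Gbar (real m) x = exp (- x) * exp_trunc m x"
proof -
  obtain k where k: "m = Suc k"
    using m gr0_conv_Suc by blast
  \<comment> \<open>only almost everywhere: for \<open>m = 1\<close> the integrand has \<open>0 powr 0 = 0\<close> at \<open>t = 0\<close>\<close>
  have "AE t \<in> {x..} in lborel.
          exp (- t) * t powr (real m - 1) / Gamma (real m) = 1 / fact k * (t ^ k * exp (- (1 * t)))"
    using AE_lborel_singleton[of 0]
  proof eventually_elim
    case (elim t)
    have "Gamma (real m) = fact k"
      using Gamma_fact[of k, where 'a = real] by (simp add: k add.commute)
    with elim x show ?case
      by (auto simp: k powr_realpow)
  qed
  then have "Gbar (real m) x = (LBINT t:{x..}. 1 / fact k * (t ^ k * exp (- (1 * t))))"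
    unfolding Gbar_def by (intro set_lebesgue_integral_cong_AE) auto
  moreover have "(LBINT t:{x..}. t ^ k * exp (- (1 * t))) = fact k * (exp (- x) * exp_trunc m x)"
    using has_bochner_integral_integral_eq[OF has_bochner_integral_power_exp_tail[of 1 x k]] x
    by (simp add: set_lebesgue_integral_def k)
  ultimately show ?thesis
    by simp
qed

lemma has_bochner_integral_power_exp_mult_exp_trunc:
  fixes a b :: real
  assumes b: "0 < b"
  shows "has_bochner_integral lborel (\<lambda>u. indicator {0..} u * (u ^ p * exp (- (b * u)) * exp_trunc m (a * u)))
           (\<Sum>j<m. a ^ j / fact j * (fact (j + p) / b ^ Suc (j + p)))"
proof -
  have "(\<lambda>u. indicator {0..} u * (u ^ p * exp (- (b * u)) * exp_trunc m (a * u))) =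
        (\<lambda>u. \<Sum>j<m. a ^ j / fact j * (indicator {0..} u * (u ^ (j + p) * exp (- (b * u)))))"
    unfolding exp_trunc_def
    by (intro ext) (simp add: sum_distrib_left power_mult_distrib power_add mult_ac)
  moreover have "has_bochner_integral lborel (\<lambda>t. indicator {0..} t * (t ^ k * exp (- (b * t))))
                   (fact k / b ^ Suc k)" for k
    using has_bochner_integral_power_exp_tail[OF b order_refl, of k] by (simp add: exp_trunc_0_right)
  ultimately show ?thesis
    by (simp only:) (intro has_bochner_integral_sum has_bochner_integral_mult_right)
qed

lemma sum_of_nat_Suc_mult_power:
  fixes q :: "'a::comm_ring_1"
  shows "(\<Sum>j<m. of_nat (Suc j) * q ^ j) * (1 - q)\<^sup>2 = 1 - of_nat (Suc m) * q ^ m + of_nat m * q ^ Suc m"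
  by (induction m) (simp_all add: algebra_simps power2_eq_square)

lemma sum_power_mult_fact_divide_power:
  fixes a b :: real
  assumes "b \<noteq> 0" and "a \<noteq> b"
  defines "q \<equiv> a / b"
  shows "(\<Sum>j<m. a ^ j / fact j * (fact j / b ^ Suc j)) = (q ^ m - 1) / (a - b)"
proof -
  have q: "q \<noteq> 1" and b_q: "b * (q - 1) = a - b"
    using assms by (auto simp: field_simps)
  have "(\<Sum>j<m. a ^ j / fact j * (fact j / b ^ Suc j)) = (\<Sum>j<m. q ^ j) / b"
    unfolding sum_divide_distrib q_def using assms(1) by (intro sum.cong refl) (simp add: power_divide)
  also have "(\<Sum>j<m. q ^ j) = (q ^ m - 1) / (q - 1)"
    using q by (simp add: sum_gp_strict field_simps)
  finally show ?thesis
    by (simp add: b_q[symmetric] mult.commute)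
qed

lemma sum_power_mult_fact_Suc_divide_power:
  fixes a b :: real
  assumes "b \<noteq> 0" and "a \<noteq> b"
  defines "q \<equiv> a / b"
  shows "(\<Sum>j<m. a ^ j / fact j * (fact (Suc j) / b ^ Suc (Suc j)))
           = (1 - real (Suc m) * q ^ m + real m * q ^ Suc m) / (a - b)\<^sup>2"
proof -
  have q: "1 - q \<noteq> 0" and b_q: "b * (1 - q) = b - a"
    using assms by (auto simp: field_simps)
  have "(\<Sum>j<m. a ^ j / fact j * (fact (Suc j) / b ^ Suc (Suc j))) = (\<Sum>j<m. real (Suc j) * q ^ j) / b\<^sup>2"
    unfolding sum_divide_distrib q_def using assms(1)
    by (intro sum.cong refl) (simp add: power_divide power2_eq_square mult_ac del: of_nat_Suc)
  also have "\<dots> = (\<Sum>j<m. real (Suc j) * q ^ j) * (1 - q)\<^sup>2 / (b * (1 - q))\<^sup>2"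
    using q by (simp add: power_mult_distrib)
  also have "\<dots> = (1 - real (Suc m) * q ^ m + real m * q ^ Suc m) / (a - b)\<^sup>2"
    unfolding sum_of_nat_Suc_mult_power b_q by (simp add: power2_commute)
  finally show ?thesis .
qed

lemma filterlim_divide_const_at_top:
  fixes c :: real
  assumes "0 < c"
  shows "filterlim (\<lambda>x. x / c) at_top at_top"
proof -
  have "filterlim (\<lambda>x. (1 / c) * x) at_top at_top"
    using assms by (intro filterlim_tendsto_pos_mult_at_top[OF tendsto_const _ filterlim_ident]) simp
  then show ?thesis
    by (simp add: divide_inverse mult.commute)
qed

lemma has_real_derivative_integral_divide:
  fixes g :: "real \<Rightarrow> real"
  assumes g: "continuous_on UNIV g" and c: "0 < c" and x: "0 < x"
  shows "((\<lambda>x. integral {0..x / c} g) has_real_derivative g (x / c) / c) (at x)"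
proof -
  have T: "0 < x / c"
    using c x by simp
  have "((\<lambda>T. integral {0..T} g) has_real_derivative g (x / c)) (at (x / c) within {0..x / c + 1})"
    using T by (intro integral_has_real_derivative continuous_on_subset[OF g]) auto
  then have "((\<lambda>T. integral {0..T} g) has_real_derivative g (x / c)) (at (x / c) within {0<..<x / c + 1})"
    by (rule DERIV_subset) auto
  then have outer: "((\<lambda>T. integral {0..T} g) has_real_derivative g (x / c)) (at (x / c))"
    using at_within_open[of "x / c" "{0<..<x / c + 1}"] T by simp
  have inner: "((\<lambda>x. x / c) has_real_derivative 1 / c) (at x)"
    using DERIV_cdivide[OF DERIV_ident, of c] by simp
  show ?thesis
    using DERIV_chain2[OF outer inner] by simp
qed

lemma SUP_ereal_atLeast_eq_infinity:
  fixes f :: "real \<Rightarrow> real"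
  assumes "filterlim f at_top at_top"
  shows "(SUP x\<in>{c..}. ereal (f x)) = \<infinity>"
proof (rule ereal_top)
  fix B :: real
  obtain N where N: "\<And>x. N \<le> x \<Longrightarrow> B \<le> f x"
    using assms by (auto simp: filterlim_at_top eventually_at_top_linorder)
  have "ereal B \<le> ereal (f (max N c))"
    using N by simp
  also have "\<dots> \<le> (SUP x\<in>{c..}. ereal (f x))"
    by (rule SUP_upper) auto
  finally show "ereal B \<le> (SUP x\<in>{c..}. ereal (f x))" .
qed

lemma INF_ereal_atLeast_eq_limit:
  fixes f :: "real \<Rightarrow> real"
  assumes lim: "(f \<longlongrightarrow> l) at_top" and lower: "\<And>x. c \<le> x \<Longrightarrow> l \<le> f x"
  shows "(INF x\<in>{c..}. ereal (f x)) = ereal l"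
proof (rule antisym)
  show "(INF x\<in>{c..}. ereal (f x)) \<le> ereal l"
  proof (rule tendsto_le[OF trivial_limit_at_top_linorder tendsto_ereal[OF lim] tendsto_const])
    show "\<forall>\<^sub>F x in at_top. (INF x\<in>{c..}. ereal (f x)) \<le> ereal (f x)"
      using eventually_ge_at_top[of c] by eventually_elim (rule INF_lower, simp)
  qed
qed (use lower in \<open>auto intro: INF_greatest\<close>)

lemma tendsto_set_integral_divide_at_top:
  fixes f :: "real \<Rightarrow> real"
  assumes f: "has_bochner_integral lborel (\<lambda>u. indicator {0..} u * f u) L" and c: "0 < c"
  shows "((\<lambda>x. LBINT u:{0..x / c}. f u) \<longlongrightarrow> L) at_top"
proof -
  have "set_integrable lborel {0..} f" and "(LBINT u:{0..}. f u) = L"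
    using f by (auto simp: set_integrable_def set_lebesgue_integral_def
                     intro: integrable.intros has_bochner_integral_integral_eq)
  then have "((\<lambda>T. LBINT u:{0..T}. f u) \<longlongrightarrow> L) at_top"
    using tendsto_set_lebesgue_integral_at_top[of 0 lborel f] by auto
  from filterlim_compose[OF this filterlim_divide_const_at_top[OF c]] show ?thesis .
qed

definition rate :: "nat \<Rightarrow> real \<Rightarrow> real" where
  "rate n w = (1 + real n * w) / w"

definition decay :: "nat \<Rightarrow> real \<Rightarrow> real" where
  "decay n w = rate n w - 2 * real n"

definition I1_integrand :: "nat \<Rightarrow> real \<Rightarrow> real \<Rightarrow> real" where
  "I1_integrand n w u = u * exp (- (decay n w * u)) * exp_trunc (2 * n) (rate n w * u)"

definition I2_integrand :: "nat \<Rightarrow> real \<Rightarrow> real \<Rightarrow> real" where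
  "I2_integrand n w u = exp (- (decay n w * u)) * exp_trunc (2 * n + 1) (rate n w * u)"

lemma continuous_on_I1_integrand: "continuous_on S (I1_integrand n w)"
  unfolding I1_integrand_def exp_trunc_def by (intro continuous_intros) auto

lemma continuous_on_I2_integrand: "continuous_on S (I2_integrand n w)"
  unfolding I2_integrand_def exp_trunc_def by (intro continuous_intros) auto

lemma kfun_eq_I3:
  "kfun n w \<mu> = (1 - 2 * (real n)\<^sup>2 * I1 n w \<mu>) / (1 + real n * I2 n w \<mu>) + I3 n w \<mu>"
  unfolding kfun_def I3_def by (simp add: add_divide_distrib diff_divide_distrib)

lemma kfun_eq_I3_I4:
  "kfun n w \<mu> = 1 / (1 + real n * I2 n w \<mu>) - 2 * (real n)\<^sup>2 * I4 n w \<mu> + I3 n w \<mu>"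
  unfolding kfun_eq_I3 I4_def by (simp add: diff_divide_distrib)

context
  fixes n :: nat and w :: real
  assumes n: "0 < n" and w: "0 < w"
begin

lemma rate_pos: "0 < rate n w"
  unfolding rate_def using n w by (intro divide_pos_pos add_pos_nonneg) auto

lemma decay_eq: "decay n w = (1 - real n * w) / w"
  unfolding decay_def rate_def using w by (simp add: field_simps)

lemma decay_pos_iff: "0 < decay n w \<longleftrightarrow> w < 1 / real n"
  unfolding decay_eq using n w by (simp add: zero_less_divide_iff less_divide_eq mult.commute)

lemma rate_minus_decay: "rate n w - decay n w = 2 * real n"
  unfolding decay_def by simp

lemma rate_neq_decay: "rate n w \<noteq> decay n w"
  using rate_minus_decay n by auto

lemma rate_divide_decay: "rate n w / decay n w = (1 + real n * w) / (1 - real n * w)"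
  unfolding decay_eq unfolding rate_def using w by simp

lemma exp_mult_Gbar_eq:
  assumes "0 < m" and "0 \<le> u"
  shows "exp (2 * real n * u) * Gbar (real m) (u * (1 + real n * w) / w)
           = exp (- (decay n w * u)) * exp_trunc m (rate n w * u)"
proof -
  have "u * (1 + real n * w) / w = rate n w * u"
    unfolding rate_def by simp
  moreover have "exp (2 * real n * u) * exp (- (rate n w * u)) = exp (- (decay n w * u))"
    unfolding decay_def by (simp add: exp_add[symmetric] algebra_simps)
  ultimately show ?thesis
    using Gbar_of_nat[OF assms(1)] assms(2) rate_pos by (simp add: mult.assoc[symmetric])
qed

lemma I1_eq_set_integral: "I1 n w \<mu> = (LBINT u:{0..\<mu> / real n}. I1_integrand n w u)"
  unfolding I1_def I1_integrand_def
  by (intro set_lebesgue_integral_cong)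
     (use n exp_mult_Gbar_eq[of "2 * n"] in \<open>auto simp: mult.assoc\<close>)

lemma I2_eq_set_integral: "I2 n w \<mu> = (LBINT u:{0..\<mu> / real n}. I2_integrand n w u)"
  unfolding I2_def I2_integrand_def
  by (intro set_lebesgue_integral_cong)
     (use exp_mult_Gbar_eq[of "2 * n + 1"] in \<open>auto simp: add.commute\<close>)

lemma I1_eq_integral: "I1 n w \<mu> = integral {0..\<mu> / real n} (I1_integrand n w)"
  using I1_eq_set_integral set_borel_integral_eq_integral(2)
          [OF borel_integrable_atLeastAtMost'[OF continuous_on_I1_integrand]]
  by simp

lemma I2_eq_integral: "I2 n w \<mu> = integral {0..\<mu> / real n} (I2_integrand n w)"
  using I2_eq_set_integral set_borel_integral_eq_integral(2)
          [OF borel_integrable_atLeastAtMost'[OF continuous_on_I2_integrand]]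
  by simp

lemma I1_integrand_nonneg: "0 \<le> u \<Longrightarrow> 0 \<le> I1_integrand n w u"
  unfolding I1_integrand_def using rate_pos by (simp add: exp_trunc_nonneg)

lemma I2_integrand_pos:
  assumes "0 \<le> u"
  shows "0 < I2_integrand n w u"
proof -
  have ru: "0 \<le> rate n w * u"
    using rate_pos assms by simp
  moreover have "1 + rate n w * u \<le> exp_trunc (2 * n + 1) (rate n w * u)"
    using n ru by (intro one_plus_le_exp_trunc) auto
  ultimately show ?thesis
    unfolding I2_integrand_def by simp
qed

lemma I1_nonneg: "0 \<le> I1 n w \<mu>"
  unfolding I1_eq_integral
  by (intro integral_nonneg integrable_continuous_interval continuous_on_I1_integrand I1_integrand_nonneg) auto

lemma I2_nonneg: "0 \<le> I2 n w \<mu>"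
  unfolding I2_eq_integral
  by (intro integral_nonneg integrable_continuous_interval continuous_on_I2_integrand
        less_imp_le[OF I2_integrand_pos]) auto

lemma one_plus_I2_pos: "0 < 1 + real n * I2 n w \<mu>"
  using I2_nonneg by (simp add: add_pos_nonneg)

lemma has_real_derivative_I1:
  "0 < \<mu> \<Longrightarrow> (I1 n w has_real_derivative I1_integrand n w (\<mu> / real n) / real n) (at \<mu>)"
  unfolding I1_eq_integral[abs_def]
  by (rule has_real_derivative_integral_divide[OF continuous_on_I1_integrand]) (use n in auto)

lemma has_real_derivative_one_plus_I2:
  assumes "0 < \<mu>"
  shows "((\<lambda>\<mu>. 1 + real n * I2 n w \<mu>) has_real_derivative I2_integrand n w (\<mu> / real n)) (at \<mu>)"
proof -
  have "(I2 n w has_real_derivative I2_integrand n w (\<mu> / real n) / real n) (at \<mu>)"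
    unfolding I2_eq_integral[abs_def]
    by (rule has_real_derivative_integral_divide[OF continuous_on_I2_integrand]) (use n assms in auto)
  from DERIV_add[OF DERIV_const[of 1] DERIV_cmult[OF this, of "real n"]] show ?thesis
    using n by simp
qed

lemma I1_tendsto_subcritical:
  assumes "w < 1 / real n"
  shows "(I1 n w \<longlongrightarrow> ((1 + real n * w) / (1 - real n * w)) ^ (2 * n)
           * (w / (1 - real n * w) - 1 / (4 * (real n)\<^sup>2)) + 1 / (4 * (real n)\<^sup>2)) at_top"
proof -
  define q where "q = (1 + real n * w) / (1 - real n * w)"
  have b: "0 < decay n w"
    using assms decay_pos_iff by simp
  have "has_bochner_integral lborel (\<lambda>u. indicator {0..} u * I1_integrand n w u)
          (\<Sum>j<2 * n. rate n w ^ j / fact j * (fact (Suc j) / decay n w ^ Suc (Suc j)))"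
    using has_bochner_integral_power_exp_mult_exp_trunc[OF b, of 1 "2 * n" "rate n w"]
    by (simp add: I1_integrand_def mult.assoc)
  from tendsto_set_integral_divide_at_top[OF this]
  have "(I1 n w \<longlongrightarrow> (\<Sum>j<2 * n. rate n w ^ j / fact j * (fact (Suc j) / decay n w ^ Suc (Suc j)))) at_top"
    unfolding I1_eq_set_integral[abs_def] using n by simp
  also have "(\<Sum>j<2 * n. rate n w ^ j / fact j * (fact (Suc j) / decay n w ^ Suc (Suc j)))
               = (1 - real (Suc (2 * n)) * q ^ (2 * n) + real (2 * n) * q ^ Suc (2 * n)) / (2 * real n)\<^sup>2"
    using sum_power_mult_fact_Suc_divide_power[of "decay n w" "rate n w" "2 * n"] b n
    by (simp add: rate_neq_decay rate_divide_decay rate_minus_decay q_def)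
  also have "\<dots> = q ^ (2 * n) * (w / (1 - real n * w) - 1 / (4 * (real n)\<^sup>2)) + 1 / (4 * (real n)\<^sup>2)"
  proof -
    have "1 - real n * w \<noteq> 0"
      using assms n by (simp add: field_simps)
    then show ?thesis
      unfolding q_def using n by (simp add: field_simps power2_eq_square)
  qed
  finally show ?thesis
    unfolding q_def .
qed

lemma I2_tendsto_subcritical:
  assumes "w < 1 / real n"
  shows "(I2 n w \<longlongrightarrow> (1 / (2 * real n)) * (((1 + real n * w) / (1 - real n * w)) ^ (2 * n + 1) - 1)) at_top"
proof -
  have b: "0 < decay n w"
    using assms decay_pos_iff by simp
  have "has_bochner_integral lborel (\<lambda>u. indicator {0..} u * I2_integrand n w u)
          (\<Sum>j<2 * n + 1. rate n w ^ j / fact j * (fact j / decay n w ^ Suc j))"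
    using has_bochner_integral_power_exp_mult_exp_trunc[OF b, of 0 "2 * n + 1" "rate n w"]
    by (simp add: I2_integrand_def)
  from tendsto_set_integral_divide_at_top[OF this]
  have "(I2 n w \<longlongrightarrow> (\<Sum>j<2 * n + 1. rate n w ^ j / fact j * (fact j / decay n w ^ Suc j))) at_top"
    unfolding I2_eq_set_integral[abs_def] using n by simp
  also have "(\<Sum>j<2 * n + 1. rate n w ^ j / fact j * (fact j / decay n w ^ Suc j))
               = (1 / (2 * real n)) * (((1 + real n * w) / (1 - real n * w)) ^ (2 * n + 1) - 1)"
    using sum_power_mult_fact_divide_power[of "decay n w" "rate n w" "2 * n + 1"] b n
    by (simp add: rate_neq_decay rate_divide_decay rate_minus_decay)
  finally show ?thesis .
qed

lemma one_plus_I2_tendsto: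
  assumes "(I2 n w \<longlongrightarrow> L) at_top"
  shows "((\<lambda>\<mu>. 1 + real n * I2 n w \<mu>) \<longlongrightarrow> 1 + real n * L) at_top" and "0 < 1 + real n * L"
proof -
  show "((\<lambda>\<mu>. 1 + real n * I2 n w \<mu>) \<longlongrightarrow> 1 + real n * L) at_top"
    by (intro tendsto_intros assms)
  have "0 \<le> L"
    by (rule tendsto_lowerbound[OF assms]) (auto simp: I2_nonneg)
  then show "0 < 1 + real n * L"
    by (simp add: add_pos_nonneg)
qed

lemma I3_filterlim_at_top:
  assumes "(I2 n w \<longlongrightarrow> L) at_top"
  shows "filterlim (I3 n w) at_top at_top"
proof -
  have inv_lim: "((\<lambda>\<mu>. 1 / (1 + real n * I2 n w \<mu>)) \<longlongrightarrow> 1 / (1 + real n * L)) at_top"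
    using one_plus_I2_tendsto[OF assms] by (intro tendsto_intros assms) auto
  have "filterlim (\<lambda>\<mu>. 1 / (1 + real n * I2 n w \<mu>) * \<mu>) at_top at_top"
    using one_plus_I2_tendsto(2)[OF assms]
    by (intro filterlim_tendsto_pos_mult_at_top[OF inv_lim _ filterlim_ident]) auto
  then show ?thesis
    unfolding I3_def by simp
qed

lemma I4_tendsto:
  assumes "(I1 n w \<longlongrightarrow> L1) at_top" and "(I2 n w \<longlongrightarrow> L2) at_top"
  shows "(I4 n w \<longlongrightarrow> L1 / (1 + real n * L2)) at_top"
  unfolding I4_def using one_plus_I2_tendsto[OF assms(2)]
  by (intro tendsto_intros assms) auto

lemma kfun_filterlim_at_top:
  assumes "(I1 n w \<longlongrightarrow> L1) at_top" and "(I2 n w \<longlongrightarrow> L2) at_top"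
  shows "filterlim (kfun n w) at_top at_top"
proof -
  have "((\<lambda>\<mu>. (1 - 2 * (real n)\<^sup>2 * I1 n w \<mu>) / (1 + real n * I2 n w \<mu>))
          \<longlongrightarrow> (1 - 2 * (real n)\<^sup>2 * L1) / (1 + real n * L2)) at_top"
    using one_plus_I2_tendsto[OF assms(2)] by (intro tendsto_intros assms) auto
  from filterlim_tendsto_add_at_top[OF this I3_filterlim_at_top[OF assms(2)]] show ?thesis
    unfolding kfun_eq_I3[abs_def] .
qed

lemma one_plus_rate_mult_le_I2_integrand:
  assumes "decay n w \<le> 0" and "0 \<le> u"
  shows "1 + rate n w * u \<le> I2_integrand n w u"
proof -
  have ru: "0 \<le> rate n w * u"
    using rate_pos assms(2) by simp
  have "1 + rate n w * u \<le> exp_trunc (2 * n + 1) (rate n w * u)"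
    using n ru by (intro one_plus_le_exp_trunc) auto
  also have "\<dots> \<le> exp (- (decay n w * u)) * exp_trunc (2 * n + 1) (rate n w * u)"
  proof -
    have "1 \<le> exp (- (decay n w * u))"
      using assms by (simp add: mult_nonpos_nonneg)
    from mult_right_mono[OF this exp_trunc_nonneg[OF ru]] show ?thesis
      by simp
  qed
  finally show ?thesis
    unfolding I2_integrand_def .
qed

lemma divide_le_I2:
  assumes "decay n w \<le> 0" and "0 \<le> \<mu>"
  shows "\<mu> / real n \<le> I2 n w \<mu>"
proof -
  have "integral {0..\<mu> / real n} (\<lambda>_. 1) \<le> integral {0..\<mu> / real n} (I2_integrand n w)"
  proof (rule integral_le)
    fix u assume "u \<in> {0..\<mu> / real n}"
    then have "0 \<le> u" and "0 \<le> rate n w * u"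
      using rate_pos by auto
    then show "1 \<le> I2_integrand n w u"
      using one_plus_rate_mult_le_I2_integrand[OF assms(1)] by fastforce
  qed (auto intro: integrable_continuous_interval continuous_on_I2_integrand)
  then show ?thesis
    using assms(2) n by (simp add: I2_eq_integral)
qed

lemma decay_nonpos: "1 / real n \<le> w \<Longrightarrow> decay n w \<le> 0"
  using decay_pos_iff by linarith

lemma I2_filterlim_at_top_supercritical:
  assumes "1 / real n \<le> w"
  shows "filterlim (I2 n w) at_top at_top"
proof (rule filterlim_at_top_mono[OF filterlim_divide_const_at_top])
  show "\<forall>\<^sub>F \<mu> in at_top. \<mu> / real n \<le> I2 n w \<mu>"
    using eventually_ge_at_top[of 0] by eventually_elim (rule divide_le_I2[OF decay_nonpos[OF assms]])
qed (use n in simp)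

lemma one_plus_I2_filterlim_at_top:
  assumes "1 / real n \<le> w"
  shows "filterlim (\<lambda>\<mu>. 1 + real n * I2 n w \<mu>) at_top at_top"
  using n by (intro filterlim_tendsto_add_at_top[OF tendsto_const]
                filterlim_tendsto_pos_mult_at_top[OF tendsto_const _ I2_filterlim_at_top_supercritical[OF assms]]) auto

lemma I2_integrand_ne_0_at_top: "\<forall>\<^sub>F \<mu> in at_top. I2_integrand n w (\<mu> / real n) \<noteq> 0"
  using eventually_ge_at_top[of 0]
proof eventually_elim
  case (elim \<mu>)
  then have "0 < I2_integrand n w (\<mu> / real n)"
    by (intro I2_integrand_pos) simp
  then show ?case
    by simp
qed

lemma I2_integrand_filterlim_at_top:
  assumes "1 / real n \<le> w"
  shows "filterlim (I2_integrand n w) at_top at_top"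
proof (rule filterlim_at_top_mono)
  show "filterlim (\<lambda>u. 1 + rate n w * u) at_top at_top"
    by (intro filterlim_tendsto_add_at_top[OF tendsto_const]
          filterlim_tendsto_pos_mult_at_top[OF tendsto_const rate_pos filterlim_ident])
  show "\<forall>\<^sub>F u in at_top. 1 + rate n w * u \<le> I2_integrand n w u"
    using eventually_ge_at_top[of 0]
    by eventually_elim (rule one_plus_rate_mult_le_I2_integrand[OF decay_nonpos[OF assms]])
qed

lemma I3_tendsto_0_supercritical:
  assumes "1 / real n \<le> w"
  shows "(I3 n w \<longlongrightarrow> 0) at_top"
  unfolding I3_def
proof (rule lhospital_at_top_at_top[where f' = "\<lambda>_. 1" and g' = "\<lambda>\<mu>. I2_integrand n w (\<mu> / real n)"])
  show "\<forall>\<^sub>F \<mu> in at_top. ((\<lambda>\<mu>. \<mu>) has_real_derivative 1) (at \<mu>)"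
    by (simp add: DERIV_ident)
  show "\<forall>\<^sub>F \<mu> in at_top.
          ((\<lambda>\<mu>. 1 + real n * I2 n w \<mu>) has_real_derivative I2_integrand n w (\<mu> / real n)) (at \<mu>)"
    using eventually_gt_at_top[of 0] by eventually_elim (rule has_real_derivative_one_plus_I2)
  from tendsto_inverse_0_at_top[OF filterlim_compose[OF I2_integrand_filterlim_at_top[OF assms]
                                                      filterlim_divide_const_at_top]] n
  show "((\<lambda>\<mu>. 1 / I2_integrand n w (\<mu> / real n)) \<longlongrightarrow> 0) at_top"
    by (simp add: inverse_eq_divide)
qed (fact one_plus_I2_filterlim_at_top[OF assms] I2_integrand_ne_0_at_top)+

lemma I1_integrand_divide_I2_integrand_tendsto:
  "((\<lambda>u. I1_integrand n w u / I2_integrand n w u) \<longlongrightarrow> 2 * real n / rate n w) at_top"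
proof -
  have "filterlim (\<lambda>u. rate n w * u) at_top at_top"
    by (rule filterlim_tendsto_pos_mult_at_top[OF tendsto_const rate_pos filterlim_ident])
  from filterlim_compose[OF tendsto_mult_exp_trunc_divide_exp_trunc_Suc this, of "2 * n"] n
  have "((\<lambda>u. rate n w * u * exp_trunc (2 * n) (rate n w * u) / exp_trunc (2 * n + 1) (rate n w * u) / rate n w)
          \<longlongrightarrow> real (2 * n) / rate n w) at_top"
    by (intro tendsto_divide tendsto_const) (auto simp: rate_pos[THEN less_imp_neq, symmetric])
  moreover have "I1_integrand n w u / I2_integrand n w u
      = rate n w * u * exp_trunc (2 * n) (rate n w * u) / exp_trunc (2 * n + 1) (rate n w * u) / rate n w" for u
    using rate_pos by (simp add: I1_integrand_def I2_integrand_def)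
  ultimately show ?thesis
    by simp
qed

lemma I4_tendsto_supercritical:
  assumes "1 / real n \<le> w"
  shows "(I4 n w \<longlongrightarrow> 2 * w / (1 + real n * w)) at_top"
  unfolding I4_def
proof (rule lhospital_at_top_at_top[where f' = "\<lambda>\<mu>. I1_integrand n w (\<mu> / real n) / real n"
                                    and g' = "\<lambda>\<mu>. I2_integrand n w (\<mu> / real n)"])
  show "\<forall>\<^sub>F \<mu> in at_top. (I1 n w has_real_derivative I1_integrand n w (\<mu> / real n) / real n) (at \<mu>)"
    using eventually_gt_at_top[of 0] by eventually_elim (rule has_real_derivative_I1)
  show "\<forall>\<^sub>F \<mu> in at_top.
          ((\<lambda>\<mu>. 1 + real n * I2 n w \<mu>) has_real_derivative I2_integrand n w (\<mu> / real n)) (at \<mu>)"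
    using eventually_gt_at_top[of 0] by eventually_elim (rule has_real_derivative_one_plus_I2)
  have "((\<lambda>\<mu>. I1_integrand n w (\<mu> / real n) / I2_integrand n w (\<mu> / real n) / real n)
          \<longlongrightarrow> 2 * real n / rate n w / real n) at_top"
    using n by (intro tendsto_divide tendsto_const
                  filterlim_compose[OF I1_integrand_divide_I2_integrand_tendsto filterlim_divide_const_at_top]) auto
  moreover have "2 * real n / rate n w / real n = 2 * w / (1 + real n * w)"
    using n unfolding rate_def by simp
  ultimately show "((\<lambda>\<mu>. I1_integrand n w (\<mu> / real n) / real n / I2_integrand n w (\<mu> / real n))
                     \<longlongrightarrow> 2 * w / (1 + real n * w)) at_top"
    by (simp add: divide_divide_eq_left mult.commute)
qed (fact one_plus_I2_filterlim_at_top[OF assms] I2_integrand_ne_0_at_top)+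

lemma I1_filterlim_at_top_supercritical:
  assumes "1 / real n \<le> w"
  shows "filterlim (I1 n w) at_top at_top"
proof -
  have "filterlim (\<lambda>\<mu>. I4 n w \<mu> * (1 + real n * I2 n w \<mu>)) at_top at_top"
    using w n by (intro filterlim_tendsto_pos_mult_at_top[OF I4_tendsto_supercritical[OF assms] _
                          one_plus_I2_filterlim_at_top[OF assms]]) (simp add: add_pos_nonneg)
  then show ?thesis
    unfolding I4_def using one_plus_I2_pos by (simp add: less_imp_neq[symmetric])
qed

lemma kfun_tendsto_supercritical:
  assumes "1 / real n \<le> w"
  shows "(kfun n w \<longlongrightarrow> - 4 * (real n)\<^sup>2 * w / (1 + real n * w)) at_top"
proof -
  have "((\<lambda>\<mu>. 1 / (1 + real n * I2 n w \<mu>)) \<longlongrightarrow> 0) at_top"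
    using tendsto_inverse_0_at_top[OF one_plus_I2_filterlim_at_top[OF assms]]
    by (simp add: inverse_eq_divide)
  then have "(kfun n w \<longlongrightarrow> 0 - 2 * (real n)\<^sup>2 * (2 * w / (1 + real n * w)) + 0) at_top"
    unfolding kfun_eq_I3_I4[abs_def]
    by (intro tendsto_add tendsto_diff tendsto_mult tendsto_const
          I4_tendsto_supercritical[OF assms] I3_tendsto_0_supercritical[OF assms])
  then show ?thesis
    using w by (simp add: field_simps)
qed

lemma I1_integrand_le:
  assumes "0 \<le> u"
  shows "I1_integrand n w u \<le> 2 * real n / rate n w * I2_integrand n w u"
proof -
  define x where "x = rate n w * u"
  have x: "0 \<le> x"
    unfolding x_def using rate_pos assms by simp
  have "I1_integrand n w u = exp (- (decay n w * u)) / rate n w * (x * exp_trunc (2 * n) x)"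
    unfolding I1_integrand_def x_def using rate_pos by simp
  also have "\<dots> \<le> exp (- (decay n w * u)) / rate n w * (real (2 * n) * exp_trunc (Suc (2 * n)) x)"
    using rate_pos by (intro mult_left_mono mult_exp_trunc_le x) simp
  also have "\<dots> = 2 * real n / rate n w * I2_integrand n w u"
    unfolding I2_integrand_def x_def by simp
  finally show ?thesis .
qed

lemma I1_le: "I1 n w \<mu> \<le> 2 * real n / rate n w * I2 n w \<mu>"
  unfolding I1_eq_integral I2_eq_integral integral_mult_right[symmetric]
  by (intro integral_le integrable_continuous_interval continuous_intros
        continuous_on_I1_integrand continuous_on_I2_integrand I1_integrand_le) auto

lemma kfun_ge:
  assumes "0 \<le> \<mu>"
  shows "- 4 * (real n)\<^sup>2 * w / (1 + real n * w) \<le> kfun n w \<mu>"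
proof -
  define A where "A = 4 * (real n)\<^sup>2 / rate n w"
  have A: "0 \<le> A"
    unfolding A_def using rate_pos by simp
  have A_eq: "A = 4 * (real n)\<^sup>2 * w / (1 + real n * w)"
    unfolding A_def rate_def by simp
  have "2 * (real n)\<^sup>2 * I1 n w \<mu> \<le> 2 * (real n)\<^sup>2 * (2 * real n / rate n w * I2 n w \<mu>)"
    using I1_le by (intro mult_left_mono) auto
  also have "\<dots> = A * (real n * I2 n w \<mu>)"
    unfolding A_def by (simp add: power2_eq_square)
  finally have "- A * (1 + real n * I2 n w \<mu>) \<le> 1 + \<mu> - 2 * (real n)\<^sup>2 * I1 n w \<mu>"
    using A assms by (simp add: ring_distribs)
  then show ?thesis
    unfolding kfun_def using one_plus_I2_pos A_eq by (simp add: le_divide_eq)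
qed

lemma kfun_le_1_supercritical:
  assumes "1 / real n \<le> w" and "0 \<le> \<mu>"
  shows "kfun n w \<mu> \<le> 1"
proof -
  have "\<mu> \<le> real n * I2 n w \<mu>"
    using divide_le_I2[OF decay_nonpos[OF assms(1)] assms(2)] n by (simp add: divide_le_eq mult.commute)
  moreover have "0 \<le> 2 * (real n)\<^sup>2 * I1 n w \<mu>"
    using I1_nonneg by simp
  ultimately have "1 + \<mu> - 2 * (real n)\<^sup>2 * I1 n w \<mu> \<le> 1 + real n * I2 n w \<mu>"
    by linarith
  then show ?thesis
    unfolding kfun_def using one_plus_I2_pos by simp
qed

lemma kfun_at_0: "kfun n w 0 = 1"
  unfolding kfun_def I1_eq_integral I2_eq_integral by simp

lemma SUP_kfun_supercritical:
  assumes "1 / real n \<le> w"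
  shows "(SUP \<mu>\<in>{0..}. ereal (kfun n w \<mu>)) = 1"
proof (rule antisym)
  show "(SUP \<mu>\<in>{0..}. ereal (kfun n w \<mu>)) \<le> 1"
    by (rule SUP_least) (use kfun_le_1_supercritical[OF assms] in auto)
  show "1 \<le> (SUP \<mu>\<in>{0..}. ereal (kfun n w \<mu>))"
    using SUP_upper[of 0 "{0..}" "\<lambda>\<mu>. ereal (kfun n w \<mu>)"] kfun_at_0 by (simp add: one_ereal_def)
qed

lemma INF_kfun_supercritical:
  assumes "1 / real n \<le> w"
  shows "(INF \<mu>\<in>{0..}. ereal (kfun n w \<mu>)) = ereal (- 4 * (real n)\<^sup>2 * w / (1 + real n * w))"
  by (rule INF_ereal_atLeast_eq_limit[OF kfun_tendsto_supercritical[OF assms] kfun_ge])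

lemma INF_kfun_ge: "ereal (- 4 * (real n)\<^sup>2 * w / (1 + real n * w)) \<le> (INF \<mu>\<in>{0..}. ereal (kfun n w \<mu>))"
  by (rule INF_greatest) (use kfun_ge in auto)

end

theorem lemma4p3:
  fixes n :: nat and w :: real
  assumes hn: "n \<ge> 2" and hw: "w > 0"
  defines "L1 \<equiv> ((1 + real n * w) / (1 - real n * w)) ^ (2 * n)
                  * (w / (1 - real n * w) - 1 / (4 * (real n)^2)) + 1 / (4 * (real n)^2)"
      and "L2 \<equiv> (1 / (2 * real n)) * (((1 + real n * w) / (1 - real n * w)) ^ (2 * n + 1) - 1)"
  shows "((w < 1 / real n \<longrightarrow> (I1 n w \<longlongrightarrow> L1) at_top) \<and> (w \<ge> 1 / real n \<longrightarrow> filterlim (I1 n w) at_top at_top)) \<and>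
     ((w < 1 / real n \<longrightarrow> (I2 n w \<longlongrightarrow> L2) at_top) \<and> (w \<ge> 1 / real n \<longrightarrow> filterlim (I2 n w) at_top at_top)) \<and>
     ((w < 1 / real n \<longrightarrow> filterlim (I3 n w) at_top at_top) \<and> (w \<ge> 1 / real n \<longrightarrow> (I3 n w \<longlongrightarrow> 0) at_top)) \<and>
     ((w < 1 / real n \<longrightarrow> (I4 n w \<longlongrightarrow> L1 / (1 + real n * L2)) at_top) \<and> (w \<ge> 1 / real n \<longrightarrow> (I4 n w \<longlongrightarrow> 2 * w / (1 + real n * w)) at_top)) \<and>
     ((w < 1 / real n \<longrightarrow> filterlim (kfun n w) at_top at_top) \<and> (w \<ge> 1 / real n \<longrightarrow> (kfun n w \<longlongrightarrow> - 4 * (real n)^2 * w / (1 + real n * w)) at_top)) \<and>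
     ((w < 1 / real n \<longrightarrow> (SUP \<mu>\<in>{0..}. ereal (kfun n w \<mu>)) = \<infinity>) \<and> (w \<ge> 1 / real n \<longrightarrow> (SUP \<mu>\<in>{0..}. ereal (kfun n w \<mu>)) = 1)) \<and>
     ((w \<ge> 1 / real n \<longrightarrow> (INF \<mu>\<in>{0..}. ereal (kfun n w \<mu>)) = ereal (- 4 * (real n)^2 * w / (1 + real n * w))) \<and> (INF \<mu>\<in>{0..}. ereal (kfun n w \<mu>)) \<ge> ereal (- 4 * (real n)^2 * w / (1 + real n * w)))"
proof -
  have n: "0 < n"
    using hn by simp
  have I1: "(I1 n w \<longlongrightarrow> L1) at_top" and I2: "(I2 n w \<longlongrightarrow> L2) at_top" if "w < 1 / real n"
    unfolding L1_def L2_def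
    using I1_tendsto_subcritical[OF n hw that] I2_tendsto_subcritical[OF n hw that] by simp_all
  note k_at_top = kfun_filterlim_at_top[OF n hw I1 I2]
  show ?thesis
    using I1 I2 I3_filterlim_at_top[OF n hw I2] I4_tendsto[OF n hw I1 I2]
      k_at_top SUP_ereal_atLeast_eq_infinity[OF k_at_top]
      I1_filterlim_at_top_supercritical[OF n hw] I2_filterlim_at_top_supercritical[OF n hw]
      I3_tendsto_0_supercritical[OF n hw] I4_tendsto_supercritical[OF n hw]
      kfun_tendsto_supercritical[OF n hw] SUP_kfun_supercritical[OF n hw]
      INF_kfun_supercritical[OF n hw] INF_kfun_ge[OF n hw]
    by (intro conjI impI) simp_all
qed

end
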